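(* Fix a client $k$ and $\lambda\in[0,1)$. Let $\mathcal H\subseteq\mathbb R^n$ be a closed convex parameter set of diameter at most $R$. Let $\widehat{\mathcal D}_k$ be an empirical distribution of $m_k$ samples and $\widehat{\mathcal C}$ an empirical distribution of $m_C$ samples. Assume that for every sample $z$ the per-sample loss $h\mapsto \ell(h,z)$ is $\mu$-strongly convex on $\mathcal H$ and has (sub)gradients of norm at most $G$ on $\mathcal H$. Define \[ g(h)=\lambda\,\mathcal L_{\widehat{\mathcal D}_k}(h)+(1-\lambda)\,\mathcal L_{\widehat{\mathcal C}}(h),\qquad h_{\widehat\lambda}=\arg\min_{h\in\mathcal H}g(h),\qquad h_c=\arg\min_{h\in\mathcal H}\mathcal L_{\widehat{\mathcal C}}(h), \] and $\epsilon_\lambda=\sqrt{\frac{\lambda^2}{m_k}+\frac{(1-\lambda)^2}{m_C}}$. Let \[ r\ge G^2\left(\frac{4G}{\mu}+2R\right)^2,\qquad \eta=\frac{1}{G\sqrt{r m_k}}\min\left(\frac{2G\lambda}{\mu(1-\lambda)},R\right). \] Run $T=r\,m_k$ steps of projected stochastic gradient descent on $g$ with step size $\eta$, starting from $h_c$, where at each step one independently selects $\widehat{\mathcal D}_k$ with probability $\lambda$ and $\widehat{\mathcal C}$ with probability $1-\lambda$, draws a uniformly random sample from the selected empirical distribution, and uses the gradient of the loss at that sample; let $h_A$ be the average of the iterates. Then \[ \mathbb E\big[g(h_A)\big]\le g(h_{\widehat\lambda})+\epsilon_\lambda, \] where the expectation is over the randomness of the SGD sampling.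
   Context: This is the analysis of the data-interpolation scheme for personalization: a client with local empirical data $\widehat{\mathcal D}_k$ trains on a $\lambda$-mixture of its local data and global/cluster data $\widehat{\mathcal C}$, starting from the central model $h_c$. For a (empirical) distribution $\mathcal D$, $\mathcal L_{\mathcal D}(h)=\mathbb E_{z\sim\mathcal D}[\ell(h,z)]$, where hypotheses are identified with their parameter vectors $h\in\mathcal H$. *)

theory Defs
  imports "HOL-Analysis.Analysis" "HOL-Probability.Probability"
begin

definition strongly_convex_on :: "real \<Rightarrow> 'a::real_inner set \<Rightarrow> ('a \<Rightarrow> real) \<Rightarrow> bool" where
  "strongly_convex_on \<mu> S f \<longleftrightarrow>
     (\<forall>x\<in>S. \<forall>y\<in>S. \<forall>t::real. 0 \<le> t \<and> t \<le> 1 \<longrightarrow>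
        f ((1 - t) *\<^sub>R x + t *\<^sub>R y)
          \<le> (1 - t) * f x + t * f y - \<mu> / 2 * t * (1 - t) * (norm (x - y))\<^sup>2)"

definition is_subgradient_on :: "'a::real_inner set \<Rightarrow> ('a \<Rightarrow> real) \<Rightarrow> 'a \<Rightarrow> 'a \<Rightarrow> bool" where
  "is_subgradient_on S f x v \<longleftrightarrow> (\<forall>y\<in>S. f y \<ge> f x + inner v (y - x))"

definition emp_loss :: "('a \<Rightarrow> 'z \<Rightarrow> real) \<Rightarrow> 'z list \<Rightarrow> 'a \<Rightarrow> real" where
  "emp_loss l zs h = (\<Sum>i<length zs. l h (zs ! i)) / real (length zs)"

definition uniform_sample :: "'z list \<Rightarrow> 'z pmf" where
  "uniform_sample zs = map_pmf (\<lambda>i. zs ! i) (pmf_of_set {..<length zs})"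

definition mixture_sample :: "real \<Rightarrow> 'z list \<Rightarrow> 'z list \<Rightarrow> 'z pmf" where
  "mixture_sample lam zk zC =
     bind_pmf (bernoulli_pmf lam) (\<lambda>b. if b then uniform_sample zk else uniform_sample zC)"

fun iid_list :: "'z pmf \<Rightarrow> nat \<Rightarrow> 'z list pmf" where
  "iid_list p 0 = return_pmf []"
| "iid_list p (Suc n) = bind_pmf p (\<lambda>z. map_pmf (Cons z) (iid_list p n))"

definition psgd_step :: "'a::euclidean_space set \<Rightarrow> ('a \<Rightarrow> 'z \<Rightarrow> 'a) \<Rightarrow> real \<Rightarrow> 'a \<Rightarrow> 'z \<Rightarrow> 'a" where
  "psgd_step H grad eta h z = closest_point H (h - eta *\<^sub>R grad h z)"

fun psgd_path :: "'a::euclidean_space set \<Rightarrow> ('a \<Rightarrow> 'z \<Rightarrow> 'a) \<Rightarrow> real \<Rightarrow> 'a \<Rightarrow> 'z list \<Rightarrow> 'a list" where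
  "psgd_path H grad eta h [] = [h]"
| "psgd_path H grad eta h (z # zs) = h # psgd_path H grad eta (psgd_step H grad eta h z) zs"

text \<open>Averaged output of T steps: average of the iterates h_0, ..., h_{T-1}.\<close>
definition psgd_avg :: "'a::euclidean_space set \<Rightarrow> ('a \<Rightarrow> 'z \<Rightarrow> 'a) \<Rightarrow> real \<Rightarrow> 'a \<Rightarrow> 'z list \<Rightarrow> 'a" where
  "psgd_avg H grad eta h0 zs =
     (1 / real (length zs)) *\<^sub>R (\<Sum>t<length zs. psgd_path H grad eta h0 zs ! t)"

end

theory Submission
  imports Defs
begin

(* Projected SGD on i.i.d. draws from the lam-mixture is a stochastic subgradient method for
   g = E_mixture l, so the classical potential argument (squared distance to h_lam) together with
   Jensen for the averaged iterate gives E g(h_A) <= g(h_lam) + D^2/(2 eta T) + eta G^2/2,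
    where D = |h_c - h_lam|.  Starting at the central minimizer keeps D small: g and L_C are
   mu-strongly convex while L_Dk is G-Lipschitz, so D <= 2 G lam / (mu (1 - lam)), and D <= R.
   With B = min (2 G lam / (mu (1 - lam))) R the step size balances the two error terms to
   B G / sqrt T, and the lower bound on r turns this into lam / sqrt m_k <= eps_lam. *)

lemma expectation_mono_finite_pmf:
  fixes f g :: "'a \<Rightarrow> real"
  assumes "finite (set_pmf M)" and "\<And>x. x \<in> set_pmf M \<Longrightarrow> f x \<le> g x"
  shows "measure_pmf.expectation M f \<le> measure_pmf.expectation M g"
  using assms by (intro integral_mono_AE) (auto simp: integrable_measure_pmf_finite AE_measure_pmf_iff)

lemma expectation_bind_pmf_finite:
  fixes f :: "'b \<Rightarrow> real"
  assumes "finite (set_pmf M)" and "\<And>x. x \<in> set_pmf M \<Longrightarrow> finite (set_pmf (N x))"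
  shows "measure_pmf.expectation (bind_pmf M N) f
           = measure_pmf.expectation M (\<lambda>x. measure_pmf.expectation (N x) f)"
  using assms
  by (simp add: pmf_expectation_bind[of "set_pmf M"] integral_measure_pmf_real[of "set_pmf M"]
      mult.commute)

lemma set_pmf_uniform_sample: "zs \<noteq> [] \<Longrightarrow> set_pmf (uniform_sample zs) = set zs"
  unfolding uniform_sample_def by (auto simp: set_pmf_of_set lessThan_empty_iff in_set_conv_nth)

lemma expectation_uniform_sample:
  "zs \<noteq> [] \<Longrightarrow> measure_pmf.expectation (uniform_sample zs) (l h) = emp_loss l zs h"
  unfolding uniform_sample_def emp_loss_def by (simp add: integral_pmf_of_set lessThan_empty_iff)

lemma finite_set_pmf_mixture_sample:
  "zk \<noteq> [] \<Longrightarrow> zC \<noteq> [] \<Longrightarrow> finite (set_pmf (mixture_sample lam zk zC))"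
  unfolding mixture_sample_def by (auto simp: set_pmf_uniform_sample)

lemma expectation_mixture_sample:
  assumes "0 \<le> lam" "lam \<le> 1" "zk \<noteq> []" "zC \<noteq> []"
  shows "measure_pmf.expectation (mixture_sample lam zk zC) (l h)
           = lam * emp_loss l zk h + (1 - lam) * emp_loss l zC h"
  unfolding mixture_sample_def using assms
  by (subst expectation_bind_pmf_finite) (auto simp: set_pmf_uniform_sample expectation_uniform_sample)

lemma finite_set_pmf_iid_list: "finite (set_pmf p) \<Longrightarrow> finite (set_pmf (iid_list p n))"
  by (induction n) auto

lemma length_in_set_pmf_iid_list: "zs \<in> set_pmf (iid_list p n) \<Longrightarrow> length zs = n"
  by (induction n arbitrary: zs) auto

lemma strongly_convex_onD:
  assumes "strongly_convex_on \<mu> S f" "x \<in> S" "y \<in> S" "0 \<le> t" "t \<le> 1"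
  shows "f ((1 - t) *\<^sub>R x + t *\<^sub>R y)
           \<le> (1 - t) * f x + t * f y - \<mu> / 2 * t * (1 - t) * (norm (x - y))\<^sup>2"
  using assms unfolding strongly_convex_on_def by blast

lemma strongly_convex_on_expectation:
  assumes q: "finite (set_pmf q)" and sc: "\<And>z. strongly_convex_on \<mu> S (\<lambda>h. l h z)"
  shows "strongly_convex_on \<mu> S (\<lambda>h. measure_pmf.expectation q (l h))"
  unfolding strongly_convex_on_def
proof (intro ballI allI impI)
  fix x y and t :: real
  assume "x \<in> S" "y \<in> S" "0 \<le> t \<and> t \<le> 1"
  then have "l ((1 - t) *\<^sub>R x + t *\<^sub>R y) z
               \<le> (1 - t) * l x z + t * l y z - \<mu> / 2 * t * (1 - t) * (norm (x - y))\<^sup>2" for z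
    using strongly_convex_onD[OF sc] by blast
  then have "measure_pmf.expectation q (l ((1 - t) *\<^sub>R x + t *\<^sub>R y))
      \<le> measure_pmf.expectation q
           (\<lambda>z. (1 - t) * l x z + t * l y z - \<mu> / 2 * t * (1 - t) * (norm (x - y))\<^sup>2)"
    by (intro expectation_mono_finite_pmf q)
  then show "measure_pmf.expectation q (l ((1 - t) *\<^sub>R x + t *\<^sub>R y))
      \<le> (1 - t) * measure_pmf.expectation q (l x) + t * measure_pmf.expectation q (l y)
         - \<mu> / 2 * t * (1 - t) * (norm (x - y))\<^sup>2"
    by (simp add: integrable_measure_pmf_finite[OF q])
qed

text \<open>Only the midpoint inequality is used, hence mu/4 rather than the sharp mu/2.\<close>
lemma strongly_convex_on_minimizer_growth:
  assumes "convex S" "strongly_convex_on \<mu> S f"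
    and x: "x \<in> S" "\<forall>y\<in>S. f x \<le> f y" and y: "y \<in> S"
  shows "\<mu> / 4 * (norm (y - x))\<^sup>2 \<le> f y - f x"
proof -
  have "(1 - 1/2) *\<^sub>R x + (1/2) *\<^sub>R y \<in> S"
    using convexD[OF \<open>convex S\<close> x(1) y] by simp
  then have "f x \<le> f ((1 - 1/2) *\<^sub>R x + (1/2) *\<^sub>R y)"
    using x(2) by blast
  also have "\<dots> \<le> (1 - 1/2) * f x + 1/2 * f y - \<mu> / 2 * (1/2) * (1 - 1/2) * (norm (x - y))\<^sup>2"
    using strongly_convex_onD[OF assms(2) x(1) y, of "1/2"] by simp
  finally show ?thesis by (simp add: norm_minus_commute)
qed

text \<open>Moving from x to x1 gains at most lam G |x1 - x| in the f0 part of the mixture, but by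
  quadratic growth around both minimizers it costs (2 - lam) mu |x1 - x|^2 / 4 overall.\<close>
lemma mixture_minimizer_dist_le:
  fixes f0 f1 :: "'a::real_inner \<Rightarrow> real"
  assumes "convex S" "0 \<le> lam" "lam < 1" "0 < \<mu>" "0 \<le> G"
    and sc1: "strongly_convex_on \<mu> S f1"
    and sc: "strongly_convex_on \<mu> S (\<lambda>h. lam * f0 h + (1 - lam) * f1 h)"
    and x1: "x1 \<in> S" "\<forall>y\<in>S. f1 x1 \<le> f1 y"
    and x: "x \<in> S" "\<forall>y\<in>S. lam * f0 x + (1 - lam) * f1 x \<le> lam * f0 y + (1 - lam) * f1 y"
    and lip: "f0 x1 - f0 x \<le> G * norm (x1 - x)"
  shows "norm (x1 - x) \<le> 2 * G * lam / (\<mu> * (1 - lam))"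
proof -
  define D where "D = norm (x1 - x)"
  have grow1: "\<mu> / 4 * D\<^sup>2 \<le> f1 x - f1 x1"
    using strongly_convex_on_minimizer_growth[OF \<open>convex S\<close> sc1 x1 x(1)]
    by (simp add: D_def norm_minus_commute)
  have grow: "\<mu> / 4 * D\<^sup>2 \<le> (lam * f0 x1 + (1 - lam) * f1 x1) - (lam * f0 x + (1 - lam) * f1 x)"
    using strongly_convex_on_minimizer_growth[OF \<open>convex S\<close> sc x x1(1)] by (simp add: D_def)
  have "lam * (f0 x1 - f0 x) \<le> lam * (G * D)"
    using lip \<open>0 \<le> lam\<close> by (simp add: D_def mult_left_mono)
  moreover have "(1 - lam) * (\<mu> / 4 * D\<^sup>2) \<le> (1 - lam) * (f1 x - f1 x1)"
    using grow1 \<open>lam < 1\<close> by (simp add: mult_left_mono)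
  moreover have "\<mu> / 4 * D\<^sup>2 \<le> lam * (f0 x1 - f0 x) - (1 - lam) * (f1 x - f1 x1)"
    using grow by (simp add: algebra_simps)
  ultimately have balance: "\<mu> / 4 * D\<^sup>2 + (1 - lam) * (\<mu> / 4 * D\<^sup>2) \<le> lam * (G * D)"
    by linarith
  have "\<mu> * (1 - lam) * D \<le> 2 * G * lam"
  proof (cases "D = 0")
    case False
    then have "0 < D"
      by (simp add: D_def)
    have "D * (\<mu> / 4 * D * (2 - lam)) = \<mu> / 4 * D\<^sup>2 + (1 - lam) * (\<mu> / 4 * D\<^sup>2)"
      by (simp add: power2_eq_square field_simps)
    also have "\<dots> \<le> lam * (G * D)"
      by (fact balance)
    also have "\<dots> = D * (lam * G)"
      by simp
    finally have "\<mu> / 4 * D * (2 - lam) \<le> lam * G"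
      using \<open>0 < D\<close> by simp
    moreover have "0 \<le> \<mu> * D * lam"
      using \<open>0 < D\<close> assms(2,4) by simp
    ultimately show ?thesis
      by (simp add: algebra_simps)
  qed (use assms(2,5) in simp)
  then show ?thesis
    using assms(3,4) by (simp add: D_def pos_le_divide_eq mult.commute)
qed

lemma convex_on_if_subgradients:
  assumes "convex S" and subgrad: "\<And>x. x \<in> S \<Longrightarrow> is_subgradient_on S f x (g x)"
  shows "convex_on S f"
proof (rule convex_onI[OF _ \<open>convex S\<close>])
  fix t :: real and x y
  assume t: "0 < t" "t < 1" and xy: "x \<in> S" "y \<in> S"
  define m where "m = (1 - t) *\<^sub>R x + t *\<^sub>R y"
  have "m \<in> S"
    using convexD[OF \<open>convex S\<close> xy, of "1 - t" t] t by (simp add: m_def)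
  then have "f m + inner (g m) (x - m) \<le> f x" and "f m + inner (g m) (y - m) \<le> f y"
    using subgrad xy unfolding is_subgradient_on_def by auto
  then have "(1 - t) * (f m + inner (g m) (x - m)) + t * (f m + inner (g m) (y - m))
               \<le> (1 - t) * f x + t * f y"
    using t by (intro add_mono mult_left_mono) auto
  moreover have "(1 - t) * inner (g m) (x - m) + t * inner (g m) (y - m) = 0"
    by (simp add: m_def inner_diff_right inner_add_right algebra_simps)
  ultimately show "f m \<le> (1 - t) * f x + t * f y"
    by (simp add: algebra_simps)
qed

lemma psgd_path_zero_step:
  "h \<in> H \<Longrightarrow> psgd_path H grad 0 h zs = replicate (Suc (length zs)) h"
  by (induction zs) (simp_all add: psgd_step_def closest_point_self)

lemma psgd_avg_zero_step:
  assumes "h \<in> H" "zs \<noteq> []"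
  shows "psgd_avg H grad 0 h zs = h"
proof -
  have "(\<Sum>t<length zs. psgd_path H grad 0 h zs ! t) = (\<Sum>t<length zs. h)"
    unfolding psgd_path_zero_step[OF assms(1)] by (intro sum.cong) (auto simp del: replicate_Suc)
  then show ?thesis
    using assms(2) by (simp add: psgd_avg_def sum_constant_scaleR)
qed

locale bounded_subgradient_loss =
  fixes H :: "'a::euclidean_space set" and l :: "'a \<Rightarrow> 'z \<Rightarrow> real"
    and grad :: "'a \<Rightarrow> 'z \<Rightarrow> 'a" and G :: real
  assumes closed_H: "closed H" and convex_H: "convex H" and H_nonempty: "H \<noteq> {}"
    and subgrad: "\<And>z h. h \<in> H \<Longrightarrow> is_subgradient_on H (\<lambda>h. l h z) h (grad h z)"
    and grad_bound: "\<And>z h. h \<in> H \<Longrightarrow> norm (grad h z) \<le> G"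
begin

abbreviation risk :: "'z pmf \<Rightarrow> 'a \<Rightarrow> real" where
  "risk q h \<equiv> measure_pmf.expectation q (l h)"

lemma G_nonneg: "0 \<le> G"
  using H_nonempty grad_bound norm_ge_zero order_trans by blast

lemma loss_diff_le_inner: "x \<in> H \<Longrightarrow> y \<in> H \<Longrightarrow> l x z - l y z \<le> inner (grad x z) (x - y)"
  using subgrad[of x z] unfolding is_subgradient_on_def by (auto simp: inner_diff_right)

lemma loss_diff_le: "x \<in> H \<Longrightarrow> y \<in> H \<Longrightarrow> l x z - l y z \<le> G * norm (x - y)"
  using loss_diff_le_inner[of x y z] norm_cauchy_schwarz[of "grad x z" "x - y"]
    mult_right_mono[OF grad_bound[of x z] norm_ge_zero[of "x - y"]]
  by linarith

lemma risk_diff_le_inner: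
  assumes q: "finite (set_pmf q)" and "x \<in> H" "y \<in> H"
  shows "risk q x - risk q y \<le> measure_pmf.expectation q (\<lambda>z. inner (grad x z) (x - y))"
proof -
  have "measure_pmf.expectation q (\<lambda>z. l x z - l y z)
          \<le> measure_pmf.expectation q (\<lambda>z. inner (grad x z) (x - y))"
    using loss_diff_le_inner assms by (intro expectation_mono_finite_pmf q)
  then show ?thesis
    by (simp add: integrable_measure_pmf_finite[OF q])
qed

lemma risk_diff_le:
  assumes q: "finite (set_pmf q)" and "x \<in> H" "y \<in> H"
  shows "risk q x - risk q y \<le> G * norm (x - y)"
proof -
  have "measure_pmf.expectation q (\<lambda>z. l x z - l y z)
          \<le> measure_pmf.expectation q (\<lambda>z. G * norm (x - y))"
    using loss_diff_le assms by (intro expectation_mono_finite_pmf q)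
  then show ?thesis
    by (simp add: integrable_measure_pmf_finite[OF q])
qed

lemma central_minimizer_dist_le:
  assumes lam: "0 \<le> lam" "lam < 1" and "0 < \<mu>" and zk: "zk \<noteq> []" and zC: "zC \<noteq> []"
    and strong: "\<And>z. strongly_convex_on \<mu> H (\<lambda>h. l h z)"
    and h_c: "h_c \<in> H" "\<forall>h\<in>H. emp_loss l zC h_c \<le> emp_loss l zC h"
    and h_lam: "h_lam \<in> H"
      "\<forall>h\<in>H. lam * emp_loss l zk h_lam + (1 - lam) * emp_loss l zC h_lam
               \<le> lam * emp_loss l zk h + (1 - lam) * emp_loss l zC h"
  shows "norm (h_c - h_lam) \<le> 2 * G * lam / (\<mu> * (1 - lam))"
proof (rule mixture_minimizer_dist_le[OF convex_H lam \<open>0 < \<mu>\<close> G_nonneg _ _ h_c h_lam])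
  have uniform: "finite (set_pmf (uniform_sample zs))"
    "risk (uniform_sample zs) h = emp_loss l zs h" if "zs \<noteq> []" for zs h
    using that by (auto simp: set_pmf_uniform_sample expectation_uniform_sample)
  show "strongly_convex_on \<mu> H (emp_loss l zC)"
    using strongly_convex_on_expectation[where l = l, OF uniform(1)[OF zC] strong]
    by (simp add: uniform(2)[OF zC])
  show "strongly_convex_on \<mu> H (\<lambda>h. lam * emp_loss l zk h + (1 - lam) * emp_loss l zC h)"
    using strongly_convex_on_expectation[where l = l,
        OF finite_set_pmf_mixture_sample[where lam = lam, OF zk zC] strong] lam
    by (simp add: expectation_mixture_sample[OF _ _ zk zC])
  show "emp_loss l zk h_c - emp_loss l zk h_lam \<le> G * norm (h_c - h_lam)"
    using risk_diff_le[OF uniform(1)[OF zk] h_c(1) h_lam(1)] by (simp add: uniform(2)[OF zk])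
qed

lemma risk_mean_le:
  assumes q: "finite (set_pmf q)" and "T > 0" and hs: "\<And>t. t < T \<Longrightarrow> hs t \<in> H"
  shows "risk q ((1 / real T) *\<^sub>R (\<Sum>t<T. hs t)) \<le> (1 / real T) * (\<Sum>t<T. risk q (hs t))"
proof -
  have "l ((1 / real T) *\<^sub>R (\<Sum>t<T. hs t)) z \<le> (\<Sum>t<T. (1 / real T) * l (hs t) z)" for z
  proof -
    have "convex_on H (\<lambda>h. l h z)"
      using convex_on_if_subgradients[OF convex_H subgrad] .
    then have "l (\<Sum>t<T. (1 / real T) *\<^sub>R hs t) z \<le> (\<Sum>t<T. (1 / real T) * l (hs t) z)"
      using \<open>T > 0\<close> hs by (intro convex_on_sum) auto
    then show ?thesis
      by (simp add: scaleR_sum_right)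
  qed
  then have "risk q ((1 / real T) *\<^sub>R (\<Sum>t<T. hs t))
               \<le> measure_pmf.expectation q (\<lambda>z. \<Sum>t<T. (1 / real T) * l (hs t) z)"
    by (intro expectation_mono_finite_pmf q)
  then show ?thesis
    by (simp add: integrable_measure_pmf_finite[OF q] sum_distrib_left)
qed

lemma psgd_step_in: "psgd_step H grad eta h z \<in> H"
  unfolding psgd_step_def using closest_point_in_set[OF closed_H H_nonempty] .

lemma nth_psgd_path_in:
  "h \<in> H \<Longrightarrow> t \<le> length zs \<Longrightarrow> psgd_path H grad eta h zs ! t \<in> H"
proof (induction zs arbitrary: h t)
  case (Cons z zs)
  then show ?case
    using Cons.IH[OF psgd_step_in] by (cases t) auto
qed simp

lemma psgd_step_dist_le:
  assumes h: "h \<in> H" and hs: "hs \<in> H"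
  shows "(norm (psgd_step H grad eta h z - hs))\<^sup>2
           \<le> (norm (h - hs))\<^sup>2 - 2 * eta * inner (grad h z) (h - hs) + eta\<^sup>2 * G\<^sup>2"
proof -
  let ?v = "grad h z"
  have "norm (psgd_step H grad eta h z - hs)
          = dist (closest_point H (h - eta *\<^sub>R ?v)) (closest_point H hs)"
    by (simp add: psgd_step_def closest_point_self[OF hs] dist_norm)
  also have "\<dots> \<le> dist (h - eta *\<^sub>R ?v) hs"
    by (rule closest_point_lipschitz[OF convex_H closed_H H_nonempty])
  finally have "(norm (psgd_step H grad eta h z - hs))\<^sup>2 \<le> (norm ((h - hs) - eta *\<^sub>R ?v))\<^sup>2"
    by (simp add: dist_norm algebra_simps power_mono)
  also have "\<dots> = (norm (h - hs))\<^sup>2 - 2 * eta * inner ?v (h - hs) + eta\<^sup>2 * (norm ?v)\<^sup>2"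
    unfolding power2_norm_eq_inner
    by (simp add: inner_diff_left inner_diff_right inner_commute algebra_simps power2_eq_square)
  also have "\<dots> \<le> (norm (h - hs))\<^sup>2 - 2 * eta * inner ?v (h - hs) + eta\<^sup>2 * G\<^sup>2"
    using grad_bound[OF h, of z] by (simp add: mult_left_mono power_mono)
  finally show ?thesis .
qed

lemma expected_psgd_step_dist_le:
  assumes p: "finite (set_pmf p)" and h: "h \<in> H" and hs: "hs \<in> H" and "0 \<le> eta"
  shows "measure_pmf.expectation p (\<lambda>z. (norm (psgd_step H grad eta h z - hs))\<^sup>2)
           \<le> (norm (h - hs))\<^sup>2 - 2 * eta * (risk p h - risk p hs) + eta\<^sup>2 * G\<^sup>2"
proof -
  have "measure_pmf.expectation p (\<lambda>z. (norm (psgd_step H grad eta h z - hs))\<^sup>2)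
          \<le> measure_pmf.expectation p
              (\<lambda>z. (norm (h - hs))\<^sup>2 - 2 * eta * inner (grad h z) (h - hs) + eta\<^sup>2 * G\<^sup>2)"
    using psgd_step_dist_le[OF h hs] by (intro expectation_mono_finite_pmf p)
  also have "\<dots> = (norm (h - hs))\<^sup>2
                  - 2 * eta * measure_pmf.expectation p (\<lambda>z. inner (grad h z) (h - hs))
                  + eta\<^sup>2 * G\<^sup>2"
    by (simp add: integrable_measure_pmf_finite[OF p])
  also have "\<dots> \<le> (norm (h - hs))\<^sup>2 - 2 * eta * (risk p h - risk p hs) + eta\<^sup>2 * G\<^sup>2"
    using risk_diff_le_inner[OF p h hs] \<open>0 \<le> eta\<close> by (simp add: mult_left_mono)
  finally show ?thesis .
qed

text \<open>The squared distance to hs is the potential: by the one-step bound each step pays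
  for its excess risk by a drop of the potential, up to eta^2 G^2 / 2.\<close>
lemma expected_psgd_regret_le:
  assumes p: "finite (set_pmf p)" and hs: "hs \<in> H" and "0 < eta" and "h \<in> H"
  shows "measure_pmf.expectation (iid_list p n)
           (\<lambda>zs. \<Sum>t<n. risk p (psgd_path H grad eta h zs ! t))
         \<le> real n * risk p hs + (norm (h - hs))\<^sup>2 / (2 * eta) + real n * eta * G\<^sup>2 / 2"
  using \<open>h \<in> H\<close>
proof (induction n arbitrary: h)
  case 0
  then show ?case
    using \<open>0 < eta\<close> by simp
next
  case (Suc n)
  define step where "step z = psgd_step H grad eta h z" for z
  define regret where "regret h' = (\<lambda>zs. \<Sum>t<n. risk p (psgd_path H grad eta h' zs ! t))" for h'
  have iid: "finite (set_pmf (iid_list p n))"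
    using finite_set_pmf_iid_list[OF p] .
  have regret_Cons: "(\<Sum>t<Suc n. risk p (psgd_path H grad eta h (z # zs) ! t))
                = risk p h + regret (step z) zs" for z zs
    by (simp only: sum.lessThan_Suc_shift) (simp add: regret_def step_def)
  have "measure_pmf.expectation (iid_list p (Suc n))
          (\<lambda>zs. \<Sum>t<Suc n. risk p (psgd_path H grad eta h zs ! t))
        = measure_pmf.expectation p (\<lambda>z. measure_pmf.expectation (iid_list p n)
            (\<lambda>zs. \<Sum>t<Suc n. risk p (psgd_path H grad eta h (z # zs) ! t)))"
    by (simp only: iid_list.simps, subst expectation_bind_pmf_finite) (auto simp: p iid)
  also have "\<dots> = measure_pmf.expectation p
                    (\<lambda>z. risk p h + measure_pmf.expectation (iid_list p n) (regret (step z)))"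
    by (simp only: regret_Cons) (simp add: integrable_measure_pmf_finite[OF iid])
  also have "\<dots> \<le> measure_pmf.expectation p
            (\<lambda>z. risk p h + (real n * risk p hs + (norm (step z - hs))\<^sup>2 / (2 * eta)
                 + real n * eta * G\<^sup>2 / 2))"
    using Suc.IH[OF psgd_step_in]
    by (intro expectation_mono_finite_pmf p) (simp add: regret_def step_def)
  also have "\<dots> = risk p h + real n * risk p hs
      + measure_pmf.expectation p (\<lambda>z. (norm (step z - hs))\<^sup>2) / (2 * eta)
      + real n * eta * G\<^sup>2 / 2"
    by (simp add: integrable_measure_pmf_finite[OF p])
  also have "\<dots> \<le> risk p h + real n * risk p hs
      + ((norm (h - hs))\<^sup>2 - 2 * eta * (risk p h - risk p hs) + eta\<^sup>2 * G\<^sup>2) / (2 * eta)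
      + real n * eta * G\<^sup>2 / 2"
    using expected_psgd_step_dist_le[OF p Suc.prems hs] \<open>0 < eta\<close>
    by (simp add: step_def divide_right_mono)
  also have "\<dots> = real (Suc n) * risk p hs + (norm (h - hs))\<^sup>2 / (2 * eta)
                  + real (Suc n) * eta * G\<^sup>2 / 2"
    using \<open>0 < eta\<close> by (simp add: field_simps power2_eq_square)
  finally show ?case .
qed

lemma expected_risk_psgd_avg_le:
  assumes p: "finite (set_pmf p)" and hs: "hs \<in> H" and "0 < eta" and h0: "h0 \<in> H" and "T > 0"
  shows "measure_pmf.expectation (iid_list p T) (\<lambda>zs. risk p (psgd_avg H grad eta h0 zs))
           \<le> risk p hs + (norm (h0 - hs))\<^sup>2 / (2 * eta * real T) + eta * G\<^sup>2 / 2"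
proof -
  have "measure_pmf.expectation (iid_list p T) (\<lambda>zs. risk p (psgd_avg H grad eta h0 zs))
          \<le> measure_pmf.expectation (iid_list p T)
              (\<lambda>zs. (1 / real T) * (\<Sum>t<T. risk p (psgd_path H grad eta h0 zs ! t)))"
  proof (intro expectation_mono_finite_pmf finite_set_pmf_iid_list[OF p])
    fix zs
    assume "zs \<in> set_pmf (iid_list p T)"
    then have "length zs = T"
      by (rule length_in_set_pmf_iid_list)
    then show "risk p (psgd_avg H grad eta h0 zs)
                 \<le> (1 / real T) * (\<Sum>t<T. risk p (psgd_path H grad eta h0 zs ! t))"
      unfolding psgd_avg_def \<open>length zs = T\<close> using \<open>T > 0\<close> \<open>length zs = T\<close>
      by (intro risk_mean_le p nth_psgd_path_in[OF h0]) auto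
  qed
  also have "\<dots> \<le> (1 / real T)
      * (real T * risk p hs + (norm (h0 - hs))\<^sup>2 / (2 * eta) + real T * eta * G\<^sup>2 / 2)"
    using expected_psgd_regret_le[OF p hs \<open>0 < eta\<close> h0, of T] by (simp add: divide_right_mono)
  also have "\<dots> = risk p hs + (norm (h0 - hs))\<^sup>2 / (2 * eta * real T) + eta * G\<^sup>2 / 2"
    using \<open>T > 0\<close> by (simp add: field_simps)
  finally show ?thesis .
qed

text \<open>For B G > 0 the step size makes both error terms equal to B G / (2 sqrt T).  If B G = 0
  the step size is 0 (for G = 0 through the convention x / 0 = 0) and the iterates stay at h0.\<close>
lemma expected_risk_psgd_avg_tuned_le:
  assumes p: "finite (set_pmf p)" and hs: "hs \<in> H" and h0: "h0 \<in> H" and "T > 0"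
    and dist: "norm (h0 - hs) \<le> B"
  shows "measure_pmf.expectation (iid_list p T)
           (\<lambda>zs. risk p (psgd_avg H grad (1 / (G * sqrt (real T)) * B) h0 zs))
         \<le> risk p hs + B * G / sqrt (real T)"
proof (cases "B * G = 0")
  case True
  then have "1 / (G * sqrt (real T)) * B = 0"
    by auto
  have "psgd_avg H grad 0 h0 zs = h0" if "zs \<in> set_pmf (iid_list p T)" for zs
    using psgd_avg_zero_step[OF h0] length_in_set_pmf_iid_list[OF that] \<open>T > 0\<close> by auto
  moreover have "risk p h0 \<le> risk p hs + G * B"
    using risk_diff_le[OF p h0 hs] mult_left_mono[OF dist G_nonneg] by linarith
  ultimately have "measure_pmf.expectation (iid_list p T)
                     (\<lambda>zs. risk p (psgd_avg H grad 0 h0 zs))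
                   \<le> measure_pmf.expectation (iid_list p T) (\<lambda>_. risk p hs + G * B)"
    by (intro expectation_mono_finite_pmf finite_set_pmf_iid_list[OF p]) simp
  with True show ?thesis
    unfolding \<open>1 / (G * sqrt (real T)) * B = 0\<close> by auto
next
  case False
  then have "B \<noteq> 0" "G \<noteq> 0"
    by auto
  moreover have "0 \<le> B"
    using dist norm_ge_zero order_trans by blast
  ultimately have "0 < B" "0 < G"
    using G_nonneg by auto
  define eta where "eta = 1 / (G * sqrt (real T)) * B"
  have "0 < eta"
    using \<open>0 < B\<close> \<open>0 < G\<close> \<open>T > 0\<close> by (simp add: eta_def)
  have "measure_pmf.expectation (iid_list p T) (\<lambda>zs. risk p (psgd_avg H grad eta h0 zs))
          \<le> risk p hs + (norm (h0 - hs))\<^sup>2 / (2 * eta * real T) + eta * G\<^sup>2 / 2"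
    by (rule expected_risk_psgd_avg_le[OF p hs \<open>0 < eta\<close> h0 \<open>T > 0\<close>])
  also have "\<dots> \<le> risk p hs + B\<^sup>2 / (2 * eta * real T) + eta * G\<^sup>2 / 2"
    using dist \<open>0 < eta\<close> \<open>T > 0\<close> by (simp add: divide_right_mono power_mono)
  also have "\<dots> = risk p hs + B * G / sqrt (real T)"
  proof -
    define s where "s = sqrt (real T)"
    have "real T = s\<^sup>2" "0 < s"
      using \<open>T > 0\<close> by (simp_all add: s_def)
    then show ?thesis
      using \<open>0 < B\<close> \<open>0 < G\<close> unfolding eta_def s_def[symmetric]
      by (simp add: field_simps power2_eq_square)
  qed
  finally show ?thesis
    unfolding eta_def .
qed

end

lemma clipped_dist_bound_le:
  fixes lam \<mu> G R :: real
  assumes "0 \<le> lam" "lam < 1" "0 < \<mu>" "0 \<le> G" "0 \<le> R"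
  shows "min (2 * G * lam / (\<mu> * (1 - lam))) R \<le> lam * (4 * G / \<mu> + 2 * R)"
proof (cases "lam \<ge> 1/2")
  case True
  have "R \<le> lam * (2 * R)"
    using True \<open>0 \<le> R\<close> mult_right_mono[of 1 "2 * lam" R] by (simp add: algebra_simps)
  also have "\<dots> \<le> lam * (4 * G / \<mu> + 2 * R)"
    using assms by (intro mult_left_mono) auto
  finally show ?thesis
    by simp
next
  case False
  have "2 * G * lam \<le> 4 * G * lam * (1 - lam)"
    using False assms(1,4) mult_left_mono[of 1 "2 * (1 - lam)" "2 * G * lam"] by (simp add: algebra_simps)
  then have "2 * G * lam / (\<mu> * (1 - lam)) \<le> 4 * G * lam / \<mu>"
    using assms(2,3) by (simp add: pos_divide_le_eq pos_le_divide_eq mult.commute mult.left_commute)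
  also have "\<dots> \<le> lam * (4 * G / \<mu> + 2 * R)"
    using assms by (simp add: algebra_simps)
  finally show ?thesis
    by simp
qed

lemma psgd_rate_le_eps:
  fixes lam \<mu> G R r :: real and m mC :: nat
  assumes "0 \<le> lam" "lam < 1" "0 < \<mu>" "0 \<le> G" "0 \<le> R" "0 < m"
    and r: "r \<ge> G\<^sup>2 * (4 * G / \<mu> + 2 * R)\<^sup>2"
  shows "min (2 * G * lam / (\<mu> * (1 - lam))) R * G / sqrt (r * real m)
           \<le> sqrt (lam\<^sup>2 / real m + (1 - lam)\<^sup>2 / real mC)"
proof (cases "r = 0")
  case False
  have "0 \<le> G\<^sup>2 * (4 * G / \<mu> + 2 * R)\<^sup>2"
    by simp
  with r have "0 \<le> r"
    by linarith
  have "G * (4 * G / \<mu> + 2 * R) \<le> sqrt r"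
    using r by (intro real_le_rsqrt) (simp add: power_mult_distrib)
  then have "lam * (G * (4 * G / \<mu> + 2 * R)) \<le> lam * sqrt r"
    using \<open>0 \<le> lam\<close> by (rule mult_left_mono)
  moreover have "min (2 * G * lam / (\<mu> * (1 - lam))) R * G \<le> lam * (4 * G / \<mu> + 2 * R) * G"
    using clipped_dist_bound_le[OF assms(1-5)] \<open>0 \<le> G\<close> by (rule mult_right_mono)
  ultimately have "min (2 * G * lam / (\<mu> * (1 - lam))) R * G \<le> lam * sqrt r"
    by (simp add: mult_ac)
  then have "min (2 * G * lam / (\<mu> * (1 - lam))) R * G / sqrt (r * real m)
               \<le> lam * sqrt r / sqrt (r * real m)"
    using \<open>0 \<le> r\<close> by (simp add: divide_right_mono)
  also have "\<dots> = sqrt (lam\<^sup>2 / real m)"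
    using False \<open>0 \<le> r\<close> \<open>0 \<le> lam\<close> by (simp add: real_sqrt_mult real_sqrt_divide)
  also have "\<dots> \<le> sqrt (lam\<^sup>2 / real m + (1 - lam)\<^sup>2 / real mC)"
    by simp
  finally show ?thesis .
qed simp

theorem theorem2:
  fixes H :: "'a::euclidean_space set"
    and l :: "'a \<Rightarrow> 'z \<Rightarrow> real"
    and grad :: "'a \<Rightarrow> 'z \<Rightarrow> 'a"
    and zk zC :: "'z list"
    and lam \<mu> G R r :: real
    and T :: nat
    and h_lam h_c :: 'a
  assumes lam: "0 \<le> lam" "lam < 1"
    and H_closed: "closed H" and H_convex: "convex H"
    and H_diam: "\<forall>x\<in>H. \<forall>y\<in>H. dist x y \<le> R"
    and mk: "length zk \<ge> 1" and mC: "length zC \<ge> 1"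
    and mu_pos: "\<mu> > 0"
    and strong: "\<forall>z. strongly_convex_on \<mu> H (\<lambda>h. l h z)"
    and subgrad: "\<forall>z. \<forall>h\<in>H. is_subgradient_on H (\<lambda>h. l h z) h (grad h z)"
    and grad_bound: "\<forall>z. \<forall>h\<in>H. norm (grad h z) \<le> G"
    and h_lam: "h_lam \<in> H"
      "\<forall>h\<in>H. lam * emp_loss l zk h_lam + (1 - lam) * emp_loss l zC h_lam
               \<le> lam * emp_loss l zk h + (1 - lam) * emp_loss l zC h"
    and h_c: "h_c \<in> H" "\<forall>h\<in>H. emp_loss l zC h_c \<le> emp_loss l zC h"
    and r: "r \<ge> G\<^sup>2 * (4 * G / \<mu> + 2 * R)\<^sup>2"
    and T: "real T = r * real (length zk)" "T > 0"
  shows "measure_pmf.expectation (iid_list (mixture_sample lam zk zC) T)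
           (\<lambda>zs. let hA = psgd_avg H grad
                             (1 / (G * sqrt (r * real (length zk)))
                                * min (2 * G * lam / (\<mu> * (1 - lam))) R)
                             h_c zs
                 in lam * emp_loss l zk hA + (1 - lam) * emp_loss l zC hA)
         \<le> lam * emp_loss l zk h_lam + (1 - lam) * emp_loss l zC h_lam
           + sqrt (lam\<^sup>2 / real (length zk) + (1 - lam)\<^sup>2 / real (length zC))"
proof -
  have zk: "zk \<noteq> []" and zC: "zC \<noteq> []"
    using mk mC by auto
  have "0 \<le> R"
    using H_diam h_c(1) zero_le_dist order_trans by blast
  interpret bounded_subgradient_loss H l grad G
    using H_closed H_convex h_c(1) subgrad grad_bound by unfold_locales auto
  define p where "p = mixture_sample lam zk zC"
  define B where "B = min (2 * G * lam / (\<mu> * (1 - lam))) R"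
  have p: "finite (set_pmf p)"
    unfolding p_def using finite_set_pmf_mixture_sample[OF zk zC] .
  have risk_p: "risk p h = lam * emp_loss l zk h + (1 - lam) * emp_loss l zC h" for h
    unfolding p_def using lam by (intro expectation_mixture_sample[OF _ _ zk zC]) auto
  have "norm (h_c - h_lam) \<le> B"
    using central_minimizer_dist_le[OF lam mu_pos zk zC strong[rule_format] h_c h_lam]
      H_diam h_c(1) h_lam(1)
    by (simp add: B_def dist_norm)
  from expected_risk_psgd_avg_tuned_le[OF p h_lam(1) h_c(1) T(2) this]
  have "measure_pmf.expectation (iid_list p T)
          (\<lambda>zs. risk p (psgd_avg H grad (1 / (G * sqrt (real T)) * B) h_c zs))
        \<le> risk p h_lam + B * G / sqrt (real T)" .
  also have "\<dots> \<le> risk p h_lam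
                   + sqrt (lam\<^sup>2 / real (length zk) + (1 - lam)\<^sup>2 / real (length zC))"
    unfolding B_def T(1)
    using psgd_rate_le_eps[OF lam(1,2) mu_pos G_nonneg \<open>0 \<le> R\<close> _ r, of "length zk" "length zC"] zk
    by simp
  finally show ?thesis
    unfolding Let_def risk_p[symmetric] p_def[symmetric] B_def[symmetric] T(1)[symmetric] .
qed

end
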